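(* $A(Q_{\min})=\frac{2\vec\rho}{b+1}+\mathrm{Reg}^\star$. Equivalently, $A(Q_{\min})$ is the set of $y\in\mathbb{R}^d$ with $y_1+\dots+y_d=0$ and $(y_1+\dots+y_s)-b(y_{d+1-s}+\dots+y_d)\ge s(d-s)$ for all $s\in\{1,\dots,d-1\}$, and this set equals $\{\frac{2\vec\rho}{b+1}+\sum_{i=1}^{d-1}\lambda_i(b\,\vec v_{d-i}-\vec v_i):\lambda_i\ge0\}$.
   Context: Let $b\ge2$, $d\ge1$ be integers, $I=\{(i,j)\in\mathbb{Z}^2:1\le i\le j\le d\}$, $E=\mathbb{R}^I$. For $q\in E$ and $(i,j)\in I$ put $\mu_{i,j}(q)=bq_{j,j}-q_{j,d}+b\sum_{s=i}^{j-1}(q_{s,j}-q_{s,j-1})$ and $\ell(q)=b\sum_{(i,j)\in I}q_{i,j}+\sum_{i=1}^d(2i-1-d-bi)q_{i,d}$. $Q_{\min}$ is the cone of $q\in E$ with $q_{i,j}\ge q_{i,j+1}$ and $q_{i,j}=q_{i+1,j+1}$ for all $1\le i\le j<d$. For a cone $Q'\subset E$, $A(Q')=\{y\in\mathbb{R}^d:\sum_{j=1}^dy_j\,\mu_{1,j}(q)\ge\ell(q)\ \forall q\in Q'\}$. $\vec\rho=(\frac{d+1}2-i)_{1\le i\le d}$. $\mathrm{Reg}\subset\mathbb{R}^d$ is the cone of $b$-regular vectors, i.e. $\mu$ with $\mu_i-\mu_{i+1}\le b(\mu_{d-i}-\mu_{d-i+1})$ for $1\le i\le d-1$, and $\mathrm{Reg}^\star$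 its dual cone for the standard scalar product. $\vec v_i=e_i-e_{i+1}$ where $(e_i)$ is the canonical basis of $\mathbb{R}^d$. *)

theory Defs
  imports Complex_Main
begin

(* Vectors of R^d are represented as functions nat => real supported on {1..d}. *)
definition vecs :: "nat \<Rightarrow> (nat \<Rightarrow> real) set" where
  "vecs d = {y. \<forall>k. k \<notin> {1..d} \<longrightarrow> y k = 0}"

definition Iset :: "nat \<Rightarrow> (nat \<times> nat) set" where
  "Iset d = {(i,j). 1 \<le> i \<and> i \<le> j \<and> j \<le> d}"

definition Espace :: "nat \<Rightarrow> (nat \<Rightarrow> nat \<Rightarrow> real) set" where
  "Espace d = {q. \<forall>i j. (i,j) \<notin> Iset d \<longrightarrow> q i j = 0}"

definition mu :: "nat \<Rightarrow> nat \<Rightarrow> (nat \<Rightarrow> nat \<Rightarrow> real) \<Rightarrow> nat \<Rightarrow> nat \<Rightarrow> real" where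
  "mu b d q i j = real b * q j j - q j d
      + real b * (\<Sum>s\<in>{i..<j}. q s j - q s (j - 1))"

definition ell :: "nat \<Rightarrow> nat \<Rightarrow> (nat \<Rightarrow> nat \<Rightarrow> real) \<Rightarrow> real" where
  "ell b d q = real b * (\<Sum>(i,j)\<in>Iset d. q i j)
      + (\<Sum>i=1..d. (2 * real i - 1 - real d - real b * real i) * q i d)"

definition Qmin :: "nat \<Rightarrow> (nat \<Rightarrow> nat \<Rightarrow> real) set" where
  "Qmin d = {q \<in> Espace d. \<forall>i j. 1 \<le> i \<and> i \<le> j \<and> j < d \<longrightarrow>
              q i j \<ge> q i (j+1) \<and> q i j = q (i+1) (j+1)}"

definition Aset :: "nat \<Rightarrow> nat \<Rightarrow> (nat \<Rightarrow> nat \<Rightarrow> real) set \<Rightarrow> (nat \<Rightarrow> real) set" where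
  "Aset b d Q' = {y \<in> vecs d. \<forall>q\<in>Q'. (\<Sum>j=1..d. y j * mu b d q 1 j) \<ge> ell b d q}"

definition rho :: "nat \<Rightarrow> nat \<Rightarrow> real" where
  "rho d i = (if i \<in> {1..d} then (real d + 1) / 2 - real i else 0)"

definition Reg :: "nat \<Rightarrow> nat \<Rightarrow> (nat \<Rightarrow> real) set" where
  "Reg b d = {m \<in> vecs d. \<forall>i. 1 \<le> i \<and> i \<le> d - 1 \<longrightarrow>
      m i - m (i+1) \<le> real b * (m (d - i) - m (d - i + 1))}"

definition RegDual :: "nat \<Rightarrow> nat \<Rightarrow> (nat \<Rightarrow> real) set" where
  "RegDual b d = {y \<in> vecs d. \<forall>m\<in>Reg b d. (\<Sum>k=1..d. y k * m k) \<ge> 0}"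

definition vv :: "nat \<Rightarrow> nat \<Rightarrow> real" where
  "vv i k = (if k = i then 1 else 0) - (if k = i + 1 then 1 else 0)"

end

theory Submission imports Defs begin

(* Proof plan.
   (1) Every q in Qmin is a Toeplitz array, q i j = c (j - i) with the nonincreasing
       profile c t = q 1 (t + 1).  Hence sum_j y_j mu_{1,j}(q) - ell(q) is a linear
       functional gap y c of the profile alone.
   (2) Nonincreasing profiles are nonnegative combinations of the constants +-1 and the
       steps [t < s], all of which come from Qmin.  Evaluating gap on these generators in
       terms of the partial sums psum y s = y_1 + ... + y_s shows that A(Qmin) is the
       polyhedron ineq_set: psum y d = 0 and psum y s + b psum y (d-s) >= s(d-s).
   (3) The cone ineq_cone (same inequalities with right-hand side 0) equals both Reg^*
       and the cone spanned by the rays b v_{d-i} - v_i, via the cycle of inclusions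
       Reg^* <= ineq_cone <= rays <= Reg^*.
   (4) Since psum (2 rho/(b+1)) s = s(d-s)/(b+1), translating by 2 rho/(b+1) maps
       ineq_cone onto ineq_set; the three descriptions of the main theorem follow. *)

lemma sum_reflect: "(\<Sum>i=1..n. g (n - i)) = (\<Sum>t<n. (g (t::nat)) :: real)"
  by (rule sum.reindex_bij_witness[where i="\<lambda>t. n - t" and j="\<lambda>i. n - i"]) auto

lemma sum_reflect_weighted:
  "(\<Sum>i=1..d. real i * f (d - i)) = (\<Sum>t<d. real (d - t) * (f t :: real))"
proof -
  have "(\<Sum>i=1..d. real i * f (d - i)) = (\<Sum>i=1..d. real (d - (d - i)) * f (d - i))"
    by (rule sum.cong) auto
  also have "\<dots> = (\<Sum>t<d. real (d - t) * f t)" by (rule sum_reflect)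
  finally show ?thesis .
qed

lemma Iset_Suc: "Iset (Suc d) = Iset d \<union> (\<lambda>i. (i, Suc d)) ` {1..Suc d}"
  unfolding Iset_def by (auto simp: le_Suc_eq)

lemma finite_Iset: "finite (Iset d)"
proof -
  have "Iset d \<subseteq> {1..d} \<times> {1..d}" unfolding Iset_def by auto
  then show ?thesis by (rule finite_subset) auto
qed

(* Summing a function of j - i over I: the diagonal j - i = t has d - t entries. *)
lemma Iset_sum_by_diagonal:
  "(\<Sum>p\<in>Iset d. f (snd p - fst p)) = (\<Sum>t<d. real (d - t) * (f t :: real))"
proof (induction d)
  case 0
  have "Iset 0 = {}" unfolding Iset_def by auto
  then show ?case by simp
next
  case (Suc d)
  have disj: "Iset d \<inter> (\<lambda>i. (i, Suc d)) ` {1..Suc d} = {}" unfolding Iset_def by auto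
  have "(\<Sum>p\<in>Iset (Suc d). f (snd p - fst p)) = (\<Sum>p\<in>Iset d. f (snd p - fst p))
      + (\<Sum>p\<in>(\<lambda>i. (i, Suc d)) ` {1..Suc d}. f (snd p - fst p))"
    unfolding Iset_Suc
    by (rule sum.union_disjoint) (use finite_Iset disj in \<open>auto simp: Iset_def\<close>)
  also have "(\<Sum>p\<in>(\<lambda>i. (i, Suc d)) ` {1..Suc d}. f (snd p - fst p)) = (\<Sum>i=1..Suc d. f (Suc d - i))"
    by (subst sum.reindex) (auto simp: inj_on_def)
  also have "\<dots> = (\<Sum>t<Suc d. f t)" by (rule sum_reflect)
  finally have "(\<Sum>p\<in>Iset (Suc d). f (snd p - fst p))
      = (\<Sum>t<d. real (d - t) * f t) + (\<Sum>t<Suc d. f t)"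
    using Suc by simp
  also have "\<dots> = (\<Sum>t<Suc d. real (Suc d - t) * f t)"
    by (simp add: sum.distrib[symmetric] Suc_diff_le algebra_simps)
  finally show ?case .
qed

(* The weights d - 1 - 2t of ell, summed over the first s diagonals. *)
lemma sum_linear_weights: "(\<Sum>t<s. (real d - 1 - 2 * real t)) = real s * (real d - real s)"
  by (induction s) (auto simp: algebra_simps)

lemma telescope_reversed:
  "(\<Sum>s\<in>{1..<(j::nat)}. (c (j - s) - c (j - 1 - s) :: real)) = c (j - 1) - c 0"
proof (induction j arbitrary: c)
  case 0 then show ?case by simp
next
  case (Suc j)
  show ?case
  proof (cases j)
    case 0 then show ?thesis by simp
  next
    case (Suc j')
    have "(\<Sum>s\<in>{1..<Suc j}. (c (Suc j - s) - c (Suc j - 1 - s))) =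
        (\<Sum>s\<in>{1..<j}. (c (Suc j - s) - c (Suc j - 1 - s))) + (c 1 - c 0)"
      using Suc by simp
    also have "(\<Sum>s\<in>{1..<j}. (c (Suc j - s) - c (Suc j - 1 - s))) =
        (\<Sum>s\<in>{1..<j}. (c (Suc (j - s)) - c (Suc (j - 1 - s))))"
      by (rule sum.cong) (auto simp: Suc_diff_le Suc_diff_Suc)
    also have "\<dots> = c j - c 1" using Suc.IH[of "\<lambda>t. c (Suc t)"] Suc by simp
    finally show ?thesis by simp
  qed
qed

lemma telescope: "t \<le> n \<Longrightarrow> (\<Sum>s\<in>{Suc t..n}. (c (s - 1) - c s :: real)) = c t - c n"
  by (induction n rule: dec_induct) auto

definition psum :: "(nat \<Rightarrow> real) \<Rightarrow> nat \<Rightarrow> real" where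
  "psum y s = (\<Sum>k=1..s. y k)"

lemma psum_0 [simp]: "psum y 0 = 0"
  by (simp add: psum_def)

lemma psum_Suc: "psum y (Suc k) = psum y k + y (Suc k)"
  by (simp add: psum_def)

lemma psum_split: "m \<le> n \<Longrightarrow> psum y n = psum y m + (\<Sum>k=Suc m..n. y k)"
proof -
  assume "m \<le> n"
  then obtain p where p: "n = m + p" using le_Suc_ex by blast
  have "sum y {1..m+p} = sum y {1..m} + sum y {m+1..m+p}" by (rule sum.ub_add_nat) simp
  then show ?thesis unfolding psum_def p by simp
qed

lemma psum_indicator:
  assumes "t \<le> d" shows "(\<Sum>k=1..d. y k * (if k \<le> t then 1 else 0)) = psum y t"
proof -
  have "(\<Sum>k=1..d. y k * (if k \<le> t then 1 else 0)) = (\<Sum>k=1..d. if k \<le> t then y k else 0)"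
    by (rule sum.cong) auto
  also have "\<dots> = (\<Sum>k\<in>{k\<in>{1..d}. k \<le> t}. y k)"
    by (subst sum.inter_filter) auto
  also have "{k\<in>{1..d}. k \<le> t} = {1..t}" using assms by auto
  finally show ?thesis by (simp add: psum_def)
qed

lemma vecs_eq_by_psum:
  assumes "y \<in> vecs d" "y' \<in> vecs d" "\<And>s. s \<le> d \<Longrightarrow> psum y s = psum y' s"
  shows "y = y'"
proof
  fix k
  show "y k = y' k"
  proof (cases "k \<in> {1..d}")
    case True
    then obtain k' where k: "k = Suc k'" "k' \<le> d" by (cases k) auto
    have "psum y (Suc k') = psum y' (Suc k')" "psum y k' = psum y' k'" using assms(3) k True by auto
    then show ?thesis unfolding k psum_Suc by simp
  next
    case False
    then show ?thesis using assms(1,2) unfolding vecs_def by auto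
  qed
qed

section \<open>Arrays in Qmin are Toeplitz\<close>

(* The relation q i j = q (i+1) (j+1) propagates an entry down its diagonal to row 1. *)
lemma Qmin_toeplitz:
  assumes q: "q \<in> Qmin d" and "1 \<le> i" "i \<le> j" "j \<le> d"
  shows "q i j = q 1 (j - i + 1)"
proof -
  have shift: "q i j = q (i+1) (j+1)" if "1 \<le> i" "i \<le> j" "j < d" for i j
    using q that unfolding Qmin_def by blast
  have "q (1 + k) j = q 1 (j - k)" if "1 + k \<le> j" "j \<le> d" for k j
    using that
  proof (induction k arbitrary: j)
    case 0 then show ?case by simp
  next
    case (Suc k)
    have "q (1 + k) (j - 1) = q (1 + k + 1) (j - 1 + 1)"
      by (rule shift) (use Suc.prems in auto)
    then have "q (1 + Suc k) j = q (1 + k) (j - 1)" using Suc.prems by simp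
    also have "\<dots> = q 1 (j - 1 - k)" using Suc by auto
    finally show ?case by simp
  qed
  from this[of "i - 1" j] assms(2-4) show ?thesis by (simp add: Suc_diff_le)
qed

(* On Qmin, mu_{1,j} only involves the first row: the inner sum telescopes. *)
lemma mu_Qmin:
  assumes q: "q \<in> Qmin d" and "1 \<le> j" "j \<le> d"
  shows "mu b d q 1 j = real b * q 1 j - q 1 (d - j + 1)"
proof -
  let ?c = "\<lambda>t. q 1 (t+1)"
  have "(\<Sum>s\<in>{1..<j}. q s j - q s (j - 1)) = (\<Sum>s\<in>{1..<j}. ?c (j - s) - ?c (j - 1 - s))"
  proof (rule sum.cong)
    fix s assume "s \<in> {1..<j}"
    then have "q s j = q 1 (j - s + 1)" "q s (j - 1) = q 1 (j - 1 - s + 1)"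
      using Qmin_toeplitz[OF q, of s j] Qmin_toeplitz[OF q, of s "j - 1"] assms by auto
    then show "q s j - q s (j - 1) = ?c (j - s) - ?c (j - 1 - s)" by simp
  qed simp
  also have "\<dots> = q 1 j - q 1 1" using telescope_reversed[of ?c j] assms by simp
  finally have inner: "(\<Sum>s\<in>{1..<j}. q s j - q s (j - 1)) = q 1 j - q 1 1" .
  have diag: "q j j = q 1 1" and last: "q j d = q 1 (d - j + 1)"
    using Qmin_toeplitz[OF q, of j j] Qmin_toeplitz[OF q, of j d] assms by auto
  show ?thesis unfolding mu_def inner diag last by (simp add: algebra_simps)
qed

lemma ell_Qmin:
  assumes q: "q \<in> Qmin d"
  shows "ell b d q = (\<Sum>i=1..d. (2 * real i - 1 - real d) * q 1 (d - i + 1))"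
proof -
  let ?c = "\<lambda>t. q 1 (t+1)"
  have "(\<Sum>(i,j)\<in>Iset d. q i j) = (\<Sum>p\<in>Iset d. ?c (snd p - fst p))"
  proof (rule sum.cong)
    fix p assume "p \<in> Iset d"
    then obtain i j where "p = (i, j)" "1 \<le> i" "i \<le> j" "j \<le> d" unfolding Iset_def by auto
    then show "(case p of (i, j) \<Rightarrow> q i j) = ?c (snd p - fst p)"
      using Qmin_toeplitz[OF q, of i j] by simp
  qed simp
  also have "\<dots> = (\<Sum>i=1..d. real i * ?c (d - i))"
    using Iset_sum_by_diagonal[of ?c d] sum_reflect_weighted[where f="?c" and d=d] by simp
  finally have diag: "(\<Sum>(i,j)\<in>Iset d. q i j) = (\<Sum>i=1..d. real i * ?c (d - i))" .
  have last_col: "(\<Sum>i=1..d. (2 * real i - 1 - real d - real b * real i) * q i d)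
     = (\<Sum>i=1..d. (2 * real i - 1 - real d) * ?c (d - i)) - real b * (\<Sum>i=1..d. real i * ?c (d - i))"
    unfolding sum_distrib_left sum_subtractf[symmetric]
  proof (rule sum.cong)
    fix i assume "i \<in> {1..d}"
    then have "q i d = ?c (d - i)" using Qmin_toeplitz[OF q, of i d] by simp
    then show "(2 * real i - 1 - real d - real b * real i) * q i d =
        (2 * real i - 1 - real d) * ?c (d - i) - real b * (real i * ?c (d - i))"
      by (simp add: algebra_simps)
  qed simp
  show ?thesis unfolding ell_def diag last_col by simp
qed

section \<open>The gap functional of a profile\<close>

(* For y in R^d and a profile c, the value of sum_j y_j mu_{1,j}(q) - ell(q) at the
   Toeplitz array with profile c. *)
definition gap :: "nat \<Rightarrow> nat \<Rightarrow> (nat \<Rightarrow> real) \<Rightarrow> (nat \<Rightarrow> real) \<Rightarrow> real" where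
  "gap b d y c = (\<Sum>j=1..d. y j * (real b * c (j - 1) - c (d - j)))
      - (\<Sum>i=1..d. (2 * real i - 1 - real d) * c (d - i))"

lemma gap_Qmin:
  assumes q: "q \<in> Qmin d"
  shows "(\<Sum>j=1..d. y j * mu b d q 1 j) - ell b d q = gap b d y (\<lambda>t. q 1 (t+1))"
proof -
  have "(\<Sum>j=1..d. y j * mu b d q 1 j)
      = (\<Sum>j=1..d. y j * (real b * q 1 (j - 1 + 1) - q 1 (d - j + 1)))"
  proof (rule sum.cong)
    fix j assume "j \<in> {1..d}"
    then show "y j * mu b d q 1 j = y j * (real b * q 1 (j - 1 + 1) - q 1 (d - j + 1))"
      using mu_Qmin[OF q, of j b] by simp
  qed simp
  then show ?thesis unfolding gap_def ell_Qmin[OF q] by simp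
qed

lemma gap_cong:
  assumes "\<And>t. t < d \<Longrightarrow> c t = c' t"
  shows "gap b d y c = gap b d y c'"
  unfolding gap_def by (intro arg_cong2[where f="(-)"] sum.cong refl) (auto simp: assms)

lemma gap_expand: "gap b d y c = (\<Sum>j=1..d. (real b * y j) * c (j - 1))
      - (\<Sum>j=1..d. y j * c (d - j)) - (\<Sum>i=1..d. (2 * real i - 1 - real d) * c (d - i))"
  unfolding gap_def by (simp add: sum_subtractf[symmetric] algebra_simps)

lemma sum_affine_combination:
  assumes "finite S"
  shows "(\<Sum>x\<in>X. (a x::real) * (\<alpha> + (\<Sum>s\<in>S. \<delta> s * g s x))) =
    \<alpha> * (\<Sum>x\<in>X. a x) + (\<Sum>s\<in>S. \<delta> s * (\<Sum>x\<in>X. a x * g s x))"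
proof -
  have "(\<Sum>x\<in>X. a x * (\<alpha> + (\<Sum>s\<in>S. \<delta> s * g s x))) =
     \<alpha> * (\<Sum>x\<in>X. a x) + (\<Sum>x\<in>X. \<Sum>s\<in>S. \<delta> s * (a x * g s x))"
    by (simp add: distrib_left sum_distrib_left sum.distrib mult.commute mult.left_commute)
  also have "(\<Sum>x\<in>X. \<Sum>s\<in>S. \<delta> s * (a x * g s x)) = (\<Sum>s\<in>S. \<delta> s * (\<Sum>x\<in>X. a x * g s x))"
    by (subst sum.swap) (simp add: sum_distrib_left)
  finally show ?thesis .
qed

lemma gap_affine:
  assumes "finite S"
  shows "gap b d y (\<lambda>t. \<alpha> + (\<Sum>s\<in>S. \<delta> s * g s t)) =
     \<alpha> * gap b d y (\<lambda>_. 1) + (\<Sum>s\<in>S. \<delta> s * gap b d y (g s))"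
  unfolding gap_expand sum_affine_combination[OF assms]
  by (simp only: right_diff_distrib sum_subtractf mult_1_right)

(* A profile on {0..<d} is its last value plus a combination of steps [t < s]
   whose coefficients c (s-1) - c s are nonnegative when c is nonincreasing. *)
lemma staircase_decomposition:
  assumes "t < d"
  shows "(c::nat\<Rightarrow>real) t = c (d - 1) + (\<Sum>s\<in>{1..d-1}. (c (s - 1) - c s) * (if t < s then 1 else 0))"
proof -
  have "(\<Sum>s\<in>{1..d-1}. (c (s - 1) - c s) * (if t < s then 1 else 0)) =
     (\<Sum>s\<in>{1..d-1}. if t < s then c (s - 1) - c s else 0)"
    by (rule sum.cong) auto
  also have "\<dots> = (\<Sum>s\<in>{s\<in>{1..d-1}. t < s}. (c (s - 1) - c s))"
    by (subst sum.inter_filter) auto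
  also have "{s\<in>{1..d-1}. t < s} = {Suc t..d-1}" by auto
  also have "(\<Sum>s\<in>{Suc t..d-1}. (c (s - 1) - c s)) = c t - c (d-1)"
    using assms by (intro telescope) auto
  finally show ?thesis by simp
qed

lemma gap_step:
  assumes "s \<le> d"
  shows "gap b d y (\<lambda>t. if t < s then 1 else 0)
       = real b * psum y s - (psum y d - psum y (d - s)) - real s * (real d - real s)"
proof -
  have first: "(\<Sum>j=1..d. (real b * y j) * (if j - 1 < s then 1 else 0)) = real b * psum y s"
  proof -
    have "(\<Sum>j=1..d. (real b * y j) * (if j - 1 < s then 1 else 0))
        = (\<Sum>j=1..d. if j \<le> s then real b * y j else 0)"
      by (rule sum.cong) auto
    also have "\<dots> = (\<Sum>j\<in>{j\<in>{1..d}. j \<le> s}. real b * y j)"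
      by (subst sum.inter_filter) auto
    also have "{j\<in>{1..d}. j \<le> s} = {1..s}" using assms by auto
    finally show ?thesis by (simp add: psum_def sum_distrib_left)
  qed
  have second: "(\<Sum>j=1..d. y j * (if d - j < s then 1 else 0)) = psum y d - psum y (d - s)"
  proof -
    have "(\<Sum>j=1..d. y j * (if d - j < s then 1 else 0)) = (\<Sum>j=1..d. if d - j < s then y j else 0)"
      by (rule sum.cong) auto
    also have "\<dots> = (\<Sum>j\<in>{j\<in>{1..d}. d - j < s}. y j)"
      by (subst sum.inter_filter) auto
    also have "{j\<in>{1..d}. d - j < s} = {Suc (d - s)..d}" using assms by auto
    finally show ?thesis using psum_split[of "d - s" d y] by simp
  qed
  have third: "(\<Sum>i=1..d. (2 * real i - 1 - real d) * (if d - i < s then 1 else 0))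
      = real s * (real d - real s)"
  proof -
    let ?g = "\<lambda>t. if t < s then real d - 1 - 2 * real t else 0"
    have "(\<Sum>i=1..d. (2 * real i - 1 - real d) * (if d - i < s then 1 else 0)) = (\<Sum>i=1..d. ?g (d - i))"
      by (rule sum.cong) (auto simp: of_nat_diff)
    also have "\<dots> = (\<Sum>t<d. ?g t)" by (rule sum_reflect)
    also have "\<dots> = (\<Sum>t\<in>{t\<in>{..<d}. t < s}. real d - 1 - 2 * real t)"
      by (subst sum.inter_filter) auto
    also have "{t\<in>{..<d}. t < s} = {..<s}" using assms by auto
    finally show ?thesis using sum_linear_weights by simp
  qed
  show ?thesis by (subst gap_expand) (simp only: first second third)
qed

lemma gap_const:
  assumes "1 \<le> d" shows "gap b d y (\<lambda>_. 1) = (real b - 1) * psum y d"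
proof -
  have "gap b d y (\<lambda>_. 1) = gap b d y (\<lambda>t. if t < d then 1 else 0)" by (rule gap_cong) simp
  also have "\<dots> = (real b - 1) * psum y d" by (subst gap_step) (auto simp: algebra_simps)
  finally show ?thesis .
qed

lemma gap_neg_const:
  assumes "1 \<le> d" shows "gap b d y (\<lambda>_. -1) = - ((real b - 1) * psum y d)"
proof -
  have "gap b d y (\<lambda>_. -1) = gap b d y (\<lambda>t. -1 + (\<Sum>s\<in>{}. (0::real) * (if t < s then 1 else 0)))"
    by simp
  also have "\<dots> = - gap b d y (\<lambda>_. 1)" by (subst gap_affine) auto
  finally show ?thesis using gap_const[OF assms] by simp
qed

section \<open>A(Qmin) as a polyhedron in partial sums\<close>

(* The polyhedron which A(Qmin) turns out to be. *)
definition ineq_set :: "nat \<Rightarrow> nat \<Rightarrow> (nat \<Rightarrow> real) set" where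
  "ineq_set b d = {y \<in> vecs d. psum y d = 0 \<and>
      (\<forall>s\<in>{1..d-1}. psum y s + real b * psum y (d - s) \<ge> real s * (real d - real s))}"

(* The step profile [t < s] rewritten so that it matches the s' = d - s inequality. *)
lemma gap_step_reflected:
  assumes "psum y d = 0" "s \<in> {1..d-1}"
  shows "gap b d y (\<lambda>t. if t < s then 1 else 0)
       = psum y (d - s) + real b * psum y (d - (d - s)) - real (d - s) * (real d - real (d - s))"
proof -
  have "d - (d - s) = s" "real (d - s) = real d - real s" "s \<le> d" using assms(2) by auto
  then show ?thesis using gap_step[of s d b y] assms(1) by (simp add: algebra_simps)
qed

lemma ball_reflect:
  "(\<forall>s\<in>{1..d-1}. P (d - s)) \<longleftrightarrow> (\<forall>s\<in>{1..(d::nat)-1}. P s)"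
proof
  assume reflected: "\<forall>s\<in>{1..d-1}. P (d - s)"
  show "\<forall>s\<in>{1..d-1}. P s"
  proof
    fix s assume "s \<in> {1..d-1}"
    then have "d - s \<in> {1..d-1}" "d - (d - s) = s" by auto
    then show "P s" using reflected by metis
  qed
next
  assume plain: "\<forall>s\<in>{1..d-1}. P s"
  show "\<forall>s\<in>{1..d-1}. P (d - s)"
  proof
    fix s assume "s \<in> {1..d-1}"
    then have "d - s \<in> {1..d-1}" by auto
    then show "P (d - s)" using plain by blast
  qed
qed

(* Arrays of Qmin realising the generating profiles: constants and steps. *)
lemma Qmin_const: "(\<lambda>i j. if (i,j) \<in> Iset d then a else 0) \<in> Qmin d"
  unfolding Qmin_def Espace_def Iset_def by auto

lemma Qmin_step: "(\<lambda>i j. if (i,j) \<in> Iset d \<and> j - i < s then 1 else 0) \<in> Qmin d"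
  unfolding Qmin_def Espace_def Iset_def by auto

lemma Aset_Qmin_iff_gap:
  "y \<in> Aset b d (Qmin d) \<longleftrightarrow> y \<in> vecs d \<and> (\<forall>q\<in>Qmin d. gap b d y (\<lambda>t. q 1 (t+1)) \<ge> 0)"
proof -
  have "ell b d q \<le> (\<Sum>j=1..d. y j * mu b d q 1 j) \<longleftrightarrow> gap b d y (\<lambda>t. q 1 (t+1)) \<ge> 0"
    if "q \<in> Qmin d" for q
    using gap_Qmin[OF that, of y b] by linarith
  then show ?thesis unfolding Aset_def by auto
qed

(* Necessity: test against the constant arrays +-1 and the step arrays. *)
lemma Aset_Qmin_sub_ineq_set:
  assumes "b \<ge> 2" "d \<ge> 1"
  shows "Aset b d (Qmin d) \<subseteq> ineq_set b d"
proof
  fix y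
  let ?ineq = "\<lambda>s. psum y s + real b * psum y (d - s) \<ge> real s * (real d - real s)"
  assume "y \<in> Aset b d (Qmin d)"
  then have yv: "y \<in> vecs d" and tested: "\<And>q. q \<in> Qmin d \<Longrightarrow> gap b d y (\<lambda>t. q 1 (t+1)) \<ge> 0"
    unfolding Aset_Qmin_iff_gap by auto
  have const: "gap b d y (\<lambda>_. a) \<ge> 0" for a
  proof -
    have "0 \<le> gap b d y (\<lambda>t. if (1, t + 1) \<in> Iset d then a else 0)"
      by (rule tested[OF Qmin_const])
    also have "\<dots> = gap b d y (\<lambda>_. a)" by (rule gap_cong) (auto simp: Iset_def)
    finally show ?thesis .
  qed
  have "(real b - 1) * psum y d = 0"
    using const[of 1] const[of "-1"] gap_const[OF assms(2), of b y] gap_neg_const[OF assms(2), of b y]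
    by linarith
  then have total: "psum y d = 0" using assms(1) by simp
  have step: "gap b d y (\<lambda>t. if t < s then 1 else 0) \<ge> 0" for s
  proof -
    have "0 \<le> gap b d y (\<lambda>t. if (1, t + 1) \<in> Iset d \<and> t + 1 - 1 < s then 1 else 0)"
      by (rule tested[OF Qmin_step])
    also have "\<dots> = gap b d y (\<lambda>t. if t < s then 1 else 0)" by (rule gap_cong) (auto simp: Iset_def)
    finally show ?thesis .
  qed
  have "\<forall>s\<in>{1..d-1}. ?ineq (d - s)"
  proof
    fix s assume "s \<in> {1..d-1}"
    then show "?ineq (d - s)" using gap_step_reflected[OF total, of s b] step[of s] by simp
  qed
  then have "\<forall>s\<in>{1..d-1}. ?ineq s"
    by (rule ball_reflect[where P="?ineq" and d=d, THEN iffD1])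
  then show "y \<in> ineq_set b d" unfolding ineq_set_def using yv total by blast
qed

(* Sufficiency: a nonincreasing profile is a nonnegative combination of the generators. *)
lemma ineq_set_sub_Aset_Qmin:
  assumes "d \<ge> 1"
  shows "ineq_set b d \<subseteq> Aset b d (Qmin d)"
proof
  fix y assume y: "y \<in> ineq_set b d"
  then have total: "psum y d = 0" unfolding ineq_set_def by auto
  let ?ineq = "\<lambda>s. psum y s + real b * psum y (d - s) \<ge> real s * (real d - real s)"
  have "\<forall>s\<in>{1..d-1}. ?ineq s" using y unfolding ineq_set_def by blast
  then have "\<forall>s\<in>{1..d-1}. ?ineq (d - s)"
    by (rule ball_reflect[where P="?ineq" and d=d, THEN iffD2])
  then have step_nonneg: "gap b d y (\<lambda>t. if t < s then 1 else 0) \<ge> 0" if "s \<in> {1..d-1}" for s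
    using gap_step_reflected[OF total that] that by simp
  have "gap b d y (\<lambda>t. q 1 (t+1)) \<ge> 0" if q: "q \<in> Qmin d" for q
  proof -
    let ?c = "\<lambda>t. q 1 (t+1)"
    have decreasing: "?c (s - 1) - ?c s \<ge> 0" if "s \<in> {1..d-1}" for s
    proof -
      have "\<forall>i j. 1 \<le> i \<and> i \<le> j \<and> j < d \<longrightarrow> q i (j+1) \<le> q i j"
        using q unfolding Qmin_def by blast
      then have "q 1 (s + 1) \<le> q 1 s" using that by auto
      then show ?thesis using that by simp
    qed
    have "gap b d y ?c = gap b d y (\<lambda>t. ?c (d - 1)
        + (\<Sum>s\<in>{1..d-1}. (?c (s - 1) - ?c s) * (if t < s then 1 else 0)))"
      by (rule gap_cong) (rule staircase_decomposition)
    also have "\<dots> = ?c (d - 1) * gap b d y (\<lambda>_. 1)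
        + (\<Sum>s\<in>{1..d-1}. (?c (s - 1) - ?c s) * gap b d y (\<lambda>t. if t < s then 1 else 0))"
      by (rule gap_affine) simp
    also have "\<dots> = (\<Sum>s\<in>{1..d-1}. (?c (s - 1) - ?c s) * gap b d y (\<lambda>t. if t < s then 1 else 0))"
      using gap_const[OF assms] total by simp
    also have "\<dots> \<ge> 0" using decreasing step_nonneg by (intro sum_nonneg mult_nonneg_nonneg) auto
    finally show ?thesis .
  qed
  then show "y \<in> Aset b d (Qmin d)"
    unfolding Aset_Qmin_iff_gap using y unfolding ineq_set_def by blast
qed

lemma Aset_Qmin_eq_ineq_set:
  assumes "b \<ge> 2" "d \<ge> 1"
  shows "Aset b d (Qmin d) = ineq_set b d"
  using Aset_Qmin_sub_ineq_set[OF assms] ineq_set_sub_Aset_Qmin[OF assms(2)] by blast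

section \<open>Three descriptions of the dual cone Reg^*\<close>

(* The recession cone of ineq_set; it will be identified with Reg^*. *)
definition ineq_cone :: "nat \<Rightarrow> nat \<Rightarrow> (nat \<Rightarrow> real) set" where
  "ineq_cone b d = {y \<in> vecs d. psum y d = 0 \<and>
      (\<forall>s\<in>{1..d-1}. psum y s + real b * psum y (d - s) \<ge> 0)}"

definition ray_comb :: "nat \<Rightarrow> nat \<Rightarrow> (nat \<Rightarrow> real) \<Rightarrow> nat \<Rightarrow> real" where
  "ray_comb b d lam = (\<lambda>k. \<Sum>i=1..d-1. lam i * (real b * vv (d - i) k - vv i k))"

(* Nondegeneracy of the 2x2 system relating s and d - s, for b >= 2. *)
lemma b_square_gt_1:
  assumes "b \<ge> 2" shows "real b * real b - 1 > 0"
proof -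
  have "real b * real b \<ge> 2 * 2" using assms by (intro mult_mono) auto
  then show ?thesis by simp
qed

(* Testing against the b-regular vectors +-1 and 1_{[1,s]} + b 1_{[1,d-s]}. *)
lemma RegDual_sub_ineq_cone:
  assumes "b \<ge> 2"
  shows "RegDual b d \<subseteq> ineq_cone b d"
proof
  fix z assume "z \<in> RegDual b d"
  then have zv: "z \<in> vecs d" and dual: "\<And>m. m \<in> Reg b d \<Longrightarrow> (\<Sum>k=1..d. z k * m k) \<ge> 0"
    unfolding RegDual_def by auto
  let ?one = "\<lambda>k. if k \<in> {1..d} then (1::real) else 0"
  have "?one \<in> Reg b d" "(\<lambda>k. - ?one k) \<in> Reg b d" unfolding Reg_def vecs_def by auto
  then have "(\<Sum>k=1..d. z k * ?one k) \<ge> 0" "(\<Sum>k=1..d. z k * - ?one k) \<ge> 0" using dual by blast+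
  moreover have "(\<Sum>k=1..d. z k * ?one k) = psum z d" by (simp add: psum_def)
  moreover have "(\<Sum>k=1..d. z k * - ?one k) = - psum z d" by (simp add: psum_def sum_negf)
  ultimately have total: "psum z d = 0" by linarith
  have "psum z s + real b * psum z (d - s) \<ge> 0" if s: "s \<in> {1..d-1}" for s
  proof -
    let ?m = "\<lambda>k. if k \<in> {1..d} then (if k \<le> s then 1 else 0) + real b * (if k \<le> d - s then 1 else 0) else 0"
    have "?m i - ?m (i+1) \<le> real b * (?m (d - i) - ?m (d - i + 1))" if i: "1 \<le> i" "i \<le> d - 1" for i
    proof -
      have inside: "i \<in> {1..d}" "i+1 \<in> {1..d}" "d - i \<in> {1..d}" "d - i + 1 \<in> {1..d}" using i by auto
      have lhs: "?m i - ?m (i+1) = (if i = s then 1 else 0) + real b * (if i = d - s then 1 else 0)"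
        using inside by (simp only: if_True) (auto simp: algebra_simps)
      have rhs: "?m (d - i) - ?m (d - i + 1) = (if i = d - s then 1 else 0) + real b * (if i = s then 1 else 0)"
        using inside i s by (simp only: if_True) (auto simp: algebra_simps)
      have "real b * real b \<ge> 1" using b_square_gt_1[OF assms] by simp
      then show ?thesis unfolding lhs rhs using assms by (auto simp: algebra_simps)
    qed
    moreover have "?m \<in> vecs d" unfolding vecs_def by auto
    ultimately have "(\<Sum>k=1..d. z k * ?m k) \<ge> 0" using dual unfolding Reg_def by blast
    moreover have "(\<Sum>k=1..d. z k * ?m k) = (\<Sum>k=1..d. z k * (if k \<le> s then 1 else 0))
        + real b * (\<Sum>k=1..d. z k * (if k \<le> d - s then 1 else 0))"
      by (simp add: sum.distrib sum_distrib_left algebra_simps)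
    moreover have "s \<le> d" "d - s \<le> d" using s by auto
    ultimately show ?thesis using psum_indicator by simp
  qed
  then show "z \<in> ineq_cone b d" unfolding ineq_cone_def using zv total by auto
qed

lemma psum_vv: "1 \<le> i \<Longrightarrow> psum (vv i) s = (if s = i then 1 else 0)"
  by (induction s) (auto simp: psum_Suc vv_def)

lemma psum_ray_comb:
  assumes "s \<le> d"
  shows "psum (ray_comb b d lam) s = (if s \<in> {1..d-1} then real b * lam (d - s) - lam s else 0)"
proof -
  have "psum (ray_comb b d lam) s = (\<Sum>i=1..d-1. \<Sum>k=1..s. lam i * (real b * vv (d - i) k - vv i k))"
    unfolding psum_def ray_comb_def by (rule sum.swap)
  also have "\<dots> = (\<Sum>i=1..d-1. real b * (if i = d - s then lam i else 0) - (if i = s then lam i else 0))"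
  proof (rule sum.cong)
    fix i assume i: "i \<in> {1..d-1}"
    have "(\<Sum>k=1..s. lam i * (real b * vv (d - i) k - vv i k))
        = lam i * (\<Sum>k=1..s. real b * vv (d - i) k - vv i k)"
      by (simp add: sum_distrib_left)
    also have "\<dots> = lam i * (real b * psum (vv (d - i)) s - psum (vv i) s)"
      by (simp add: psum_def sum_subtractf sum_distrib_left)
    also have "\<dots> = real b * (if i = d - s then lam i else 0) - (if i = s then lam i else 0)"
    proof -
      have "1 \<le> i" "1 \<le> d - i" and swap: "(s = d - i) = (i = d - s)" using i assms by auto
      then show ?thesis by (simp add: psum_vv swap algebra_simps)
    qed
    finally show "(\<Sum>k=1..s. lam i * (real b * vv (d - i) k - vv i k))
        = real b * (if i = d - s then lam i else 0) - (if i = s then lam i else 0)" .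
  qed simp
  also have "\<dots> = real b * (if d - s \<in> {1..d-1} then lam (d - s) else 0) - (if s \<in> {1..d-1} then lam s else 0)"
    by (simp add: sum_subtractf sum_distrib_left[symmetric] sum.delta)
  also have "\<dots> = (if s \<in> {1..d-1} then real b * lam (d - s) - lam s else 0)"
    using assms by auto
  finally show ?thesis .
qed

lemma ray_comb_vecs: "ray_comb b d lam \<in> vecs d"
  unfolding vecs_def ray_comb_def by (auto intro!: sum.neutral simp: vv_def)

(* Inverting psum_i = b lam_{d-i} - lam_i for the coefficients lam. *)
lemma solve_reflected_pair:
  assumes "(B::real) \<noteq> 0" "B = c*c - 1"
  shows "c * ((x + c*y)/B) - (y + c*x)/B = y"
proof -
  have "c * ((x + c*y)/B) - (y + c*x)/B = (c*(x+c*y) - (y + c*x))/B" by (simp add: diff_divide_distrib)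
  also have "c*(x+c*y) - (y + c*x) = y * B" unfolding assms(2) by (simp add: algebra_simps)
  finally show ?thesis using assms(1) by simp
qed

(* Every vector of ineq_cone is a ray combination with the coefficients obtained
   from its partial sums; they are nonnegative by the cone inequalities. *)
lemma ineq_cone_sub_rays:
  assumes "b \<ge> 2"
  shows "ineq_cone b d \<subseteq> {ray_comb b d lam | lam. \<forall>i\<in>{1..d-1}. lam i \<ge> 0}"
proof
  fix z assume "z \<in> ineq_cone b d"
  then have zv: "z \<in> vecs d" and total: "psum z d = 0"
    and cone: "\<And>s. s \<in> {1..d-1} \<Longrightarrow> psum z s + real b * psum z (d - s) \<ge> 0"
    unfolding ineq_cone_def by auto
  have pos: "real b * real b - 1 > 0" by (rule b_square_gt_1[OF assms])
  define lam where "lam i = (psum z i + real b * psum z (d - i)) / (real b * real b - 1)" for i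
  have lam_nonneg: "\<forall>i\<in>{1..d-1}. lam i \<ge> 0"
    unfolding lam_def using cone pos by simp
  have "z = ray_comb b d lam"
  proof (rule vecs_eq_by_psum[OF zv ray_comb_vecs])
    fix s assume s: "s \<le> d"
    show "psum z s = psum (ray_comb b d lam) s"
    proof (cases "s \<in> {1..d-1}")
      case True
      then have "d - (d - s) = s" by auto
      then have "real b * lam (d - s) - lam s = psum z s"
        unfolding lam_def
        using solve_reflected_pair[of "real b * real b - 1" "real b" "psum z (d - s)" "psum z s"] pos
        by simp
      then show ?thesis using psum_ray_comb[OF s, of b lam] True by simp
    next
      case False
      then have "s = 0 \<or> s = d" using s by auto
      then show ?thesis using psum_ray_comb[OF s, of b lam] False total by auto
    qed
  qed
  then show "z \<in> {ray_comb b d lam | lam. \<forall>i\<in>{1..d-1}. lam i \<ge> 0}" using lam_nonneg by auto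
qed

lemma vv_pairing:
  assumes "1 \<le> i" "i < d"
  shows "(\<Sum>k=1..d. vv i k * m k) = m i - m (Suc i)"
proof -
  have "(\<Sum>k=1..d. vv i k * m k) = (\<Sum>k=1..d. (if k = i then m k else 0) - (if k = Suc i then m k else 0))"
    by (rule sum.cong) (auto simp: vv_def)
  also have "\<dots> = m i - m (Suc i)" using assms by (simp add: sum_subtractf sum.delta)
  finally show ?thesis .
qed

(* Each ray b v_{d-i} - v_i pairs nonnegatively with b-regular vectors: this is
   exactly the defining inequality of Reg. *)
lemma rays_sub_RegDual:
  "{ray_comb b d lam | lam. \<forall>i\<in>{1..d-1}. lam i \<ge> 0} \<subseteq> RegDual b d"
proof
  fix z assume "z \<in> {ray_comb b d lam | lam. \<forall>i\<in>{1..d-1}. lam i \<ge> 0}"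
  then obtain lam where z: "z = ray_comb b d lam" and lam_nonneg: "\<forall>i\<in>{1..d-1}. lam i \<ge> 0"
    by auto
  have "(\<Sum>k=1..d. z k * m k) \<ge> 0" if m: "m \<in> Reg b d" for m
  proof -
    have "(\<Sum>k=1..d. z k * m k)
        = (\<Sum>i=1..d-1. lam i * (real b * (\<Sum>k=1..d. vv (d - i) k * m k) - (\<Sum>k=1..d. vv i k * m k)))"
      unfolding z ray_comb_def sum_distrib_right
      by (subst sum.swap) (simp add: sum_distrib_left sum_subtractf algebra_simps)
    also have "\<dots> = (\<Sum>i=1..d-1. lam i * (real b * (m (d - i) - m (d - i + 1)) - (m i - m (i + 1))))"
    proof (rule sum.cong)
      fix i assume "i \<in> {1..d-1}"
      then have "1 \<le> i" "i < d" "1 \<le> d - i" "d - i < d" by auto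
      then show "lam i * (real b * (\<Sum>k=1..d. vv (d - i) k * m k) - (\<Sum>k=1..d. vv i k * m k))
          = lam i * (real b * (m (d - i) - m (d - i + 1)) - (m i - m (i + 1)))"
        using vv_pairing[of i d m] vv_pairing[of "d - i" d m] by simp
    qed simp
    also have "\<dots> \<ge> 0"
      using m lam_nonneg unfolding Reg_def by (intro sum_nonneg mult_nonneg_nonneg) auto
    finally show ?thesis .
  qed
  then show "z \<in> RegDual b d" unfolding RegDual_def z using ray_comb_vecs by auto
qed

lemma RegDual_eq_ineq_cone:
  assumes "b \<ge> 2" shows "RegDual b d = ineq_cone b d"
  using RegDual_sub_ineq_cone[OF assms] ineq_cone_sub_rays[OF assms] rays_sub_RegDual by blast

lemma rays_eq_ineq_cone:
  assumes "b \<ge> 2" shows "{ray_comb b d lam | lam. \<forall>i\<in>{1..d-1}. lam i \<ge> 0} = ineq_cone b d"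
  using RegDual_sub_ineq_cone[OF assms] ineq_cone_sub_rays[OF assms] rays_sub_RegDual by blast

section \<open>Translation by 2 rho / (b + 1)\<close>

definition rho_shift :: "nat \<Rightarrow> nat \<Rightarrow> (nat \<Rightarrow> real) set \<Rightarrow> (nat \<Rightarrow> real) set" where
  "rho_shift b d Z = {(\<lambda>k. 2 * rho d k / (real b + 1) + z k) | z. z \<in> Z}"

lemma psum_rho: "s \<le> d \<Longrightarrow> psum (rho d) s = real s * (real d - real s) / 2"
proof (induction s)
  case 0 then show ?case by simp
next
  case (Suc s)
  have "rho d (Suc s) = (real d + 1) / 2 - real (Suc s)" using Suc.prems by (simp add: rho_def)
  then have "psum (rho d) (Suc s) = real s * (real d - real s) / 2 + ((real d + 1) / 2 - real (Suc s))"
    using Suc by (simp add: psum_Suc)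
  also have "\<dots> = real (Suc s) * (real d - real (Suc s)) / 2" by (simp add: field_simps)
  finally show ?case .
qed

(* The shift turns the right-hand sides s(d-s) of ineq_set into 0, because
   psum r s + b psum r (d-s) = s(d-s) for r = 2 rho/(b+1). *)
lemma shift_mem_ineq_set:
  "(\<lambda>k. 2 * rho d k / (real b + 1) + z k) \<in> ineq_set b d \<longleftrightarrow> z \<in> ineq_cone b d"
proof -
  let ?r = "\<lambda>k. 2 * rho d k / (real b + 1)"
  have psum_r: "psum ?r s = real s * (real d - real s) / (real b + 1)" if "s \<le> d" for s
    using psum_rho[OF that] unfolding psum_def
    by (simp add: sum_divide_distrib[symmetric] sum_distrib_left[symmetric])
  have psum_add: "psum (\<lambda>k. ?r k + z k) s = psum ?r s + psum z s" for s
    by (simp add: psum_def sum.distrib)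
  have "?r \<in> vecs d" unfolding vecs_def rho_def by auto
  then have in_vecs: "(\<lambda>k. ?r k + z k) \<in> vecs d \<longleftrightarrow> z \<in> vecs d" unfolding vecs_def by auto
  have total: "psum (\<lambda>k. ?r k + z k) d = psum z d" unfolding psum_add using psum_r[of d] by simp
  have ineq: "psum (\<lambda>k. ?r k + z k) s + real b * psum (\<lambda>k. ?r k + z k) (d - s) \<ge> real s * (real d - real s)
     \<longleftrightarrow> psum z s + real b * psum z (d - s) \<ge> 0" if s: "s \<in> {1..d-1}" for s
  proof -
    have e: "s \<le> d" "d - s \<le> d" "real (d - s) = real d - real s" using s by auto
    have "psum ?r s + real b * psum ?r (d - s)
        = (real s * (real d - real s) + real b * ((real d - real s) * (real d - (real d - real s)))) / (real b + 1)"
      unfolding psum_r[OF e(1)] psum_r[OF e(2)] e(3) by (simp add: add_divide_distrib)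
    also have "\<dots> = real s * (real d - real s)" by (simp add: field_simps)
    finally have "psum ?r s + real b * psum ?r (d - s) = real s * (real d - real s)" .
    moreover have "psum (\<lambda>k. ?r k + z k) s + real b * psum (\<lambda>k. ?r k + z k) (d - s)
        = (psum z s + real b * psum z (d - s)) + (psum ?r s + real b * psum ?r (d - s))"
      unfolding psum_add by (simp add: algebra_simps)
    ultimately show ?thesis by linarith
  qed
  show ?thesis unfolding ineq_set_def ineq_cone_def using in_vecs total ineq by auto
qed

lemma rho_shift_ineq_cone: "rho_shift b d (ineq_cone b d) = ineq_set b d"
proof
  show "rho_shift b d (ineq_cone b d) \<subseteq> ineq_set b d"
  proof
    fix y assume "y \<in> rho_shift b d (ineq_cone b d)"
    then obtain z where "y = (\<lambda>k. 2 * rho d k / (real b + 1) + z k)" "z \<in> ineq_cone b d"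
      unfolding rho_shift_def by blast
    then show "y \<in> ineq_set b d" using shift_mem_ineq_set by blast
  qed
next
  show "ineq_set b d \<subseteq> rho_shift b d (ineq_cone b d)"
  proof
    fix y assume y: "y \<in> ineq_set b d"
    define z where "z k = y k - 2 * rho d k / (real b + 1)" for k
    have y_eq: "y = (\<lambda>k. 2 * rho d k / (real b + 1) + z k)" unfolding z_def by auto
    then have "z \<in> ineq_cone b d" using y shift_mem_ineq_set[of d b z] by simp
    then show "y \<in> rho_shift b d (ineq_cone b d)" unfolding rho_shift_def using y_eq by blast
  qed
qed

(* The inequalities of the main theorem, written with tail sums, define ineq_set:
   when the total sum vanishes, the tail sum over {d+1-s..d} is - psum y (d-s). *)
lemma tail_sum_form_eq_ineq_set:
  "{y \<in> vecs d. (\<Sum>k=1..d. y k) = 0 \<and>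
      (\<forall>s\<in>{1..d-1}. (\<Sum>k=1..s. y k) - real b * (\<Sum>k=d+1-s..d. y k) \<ge> real s * (real d - real s))}
   = ineq_set b d"
proof -
  have tail: "psum y s - real b * (\<Sum>k=d+1-s..d. y k) = psum y s + real b * psum y (d - s)"
    if "psum y d = 0" "s \<in> {1..d-1}" for y s
  proof -
    have "d + 1 - s = Suc (d - s)" using that by auto
    then have "(\<Sum>k=d+1-s..d. y k) = - psum y (d - s)" using psum_split[of "d - s" d y] that(1) by simp
    then show ?thesis by simp
  qed
  show ?thesis unfolding ineq_set_def psum_def[symmetric]
  proof (rule Collect_cong, rule conj_cong[OF refl], rule conj_cong[OF refl])
    fix y assume total: "psum y d = 0"
    show "(\<forall>s\<in>{1..d-1}. psum y s - real b * (\<Sum>k=d+1-s..d. y k) \<ge> real s * (real d - real s)) =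
        (\<forall>s\<in>{1..d-1}. psum y s + real b * psum y (d - s) \<ge> real s * (real d - real s))"
    proof (rule ball_cong[OF refl])
      fix s assume s: "s \<in> {1..d-1}"
      show "(psum y s - real b * (\<Sum>k=d+1-s..d. y k) \<ge> real s * (real d - real s)) =
          (psum y s + real b * psum y (d - s) \<ge> real s * (real d - real s))"
        unfolding tail[OF total s] ..
    qed
  qed
qed

lemma rho_shift_rays:
  "rho_shift b d {ray_comb b d lam | lam. \<forall>i\<in>{1..d-1}. lam i \<ge> 0}
   = {(\<lambda>k. 2 * rho d k / (real b + 1) + (\<Sum>i=1..d-1. lam i * (real b * vv (d - i) k - vv i k))) | lam.
        \<forall>i\<in>{1..d-1}. lam i \<ge> 0}"
proof -
  have "rho_shift b d {ray_comb b d lam | lam. \<forall>i\<in>{1..d-1}. lam i \<ge> 0}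
      = {(\<lambda>k. 2 * rho d k / (real b + 1) + ray_comb b d lam k) | lam. \<forall>i\<in>{1..d-1}. lam i \<ge> 0}"
    unfolding rho_shift_def by blast
  then show ?thesis by (simp add: ray_comb_def)
qed

theorem mainTheorem14:
  fixes b d :: nat
  assumes "b \<ge> 2" and "d \<ge> 1"
  shows "Aset b d (Qmin d) =
           {(\<lambda>k. 2 * rho d k / (real b + 1) + z k) | z. z \<in> RegDual b d}
       \<and> Aset b d (Qmin d) =
           {y \<in> vecs d. (\<Sum>k=1..d. y k) = 0 \<and>
              (\<forall>s\<in>{1..d-1}. (\<Sum>k=1..s. y k) - real b * (\<Sum>k=d+1-s..d. y k)
                              \<ge> real s * (real d - real s))}
       \<and> Aset b d (Qmin d) =
           {(\<lambda>k. 2 * rho d k / (real b + 1)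
                  + (\<Sum>i=1..d-1. lam i * (real b * vv (d - i) k - vv i k))) | lam.
              \<forall>i\<in>{1..d-1}. lam i \<ge> 0}"
proof -
  have polyhedron: "Aset b d (Qmin d) = ineq_set b d"
    by (rule Aset_Qmin_eq_ineq_set[OF assms])
  also have "\<dots> = rho_shift b d (ineq_cone b d)"
    by (rule rho_shift_ineq_cone[symmetric])
  finally have shifted_cone: "Aset b d (Qmin d) = rho_shift b d (ineq_cone b d)" .
  show ?thesis
  proof (intro conjI)
    show "Aset b d (Qmin d) = {(\<lambda>k. 2 * rho d k / (real b + 1) + z k) | z. z \<in> RegDual b d}"
      using shifted_cone RegDual_eq_ineq_cone[OF assms(1)] unfolding rho_shift_def by simp
    show "Aset b d (Qmin d) = {y \<in> vecs d. (\<Sum>k=1..d. y k) = 0 \<and>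
        (\<forall>s\<in>{1..d-1}. (\<Sum>k=1..s. y k) - real b * (\<Sum>k=d+1-s..d. y k) \<ge> real s * (real d - real s))}"
      using polyhedron tail_sum_form_eq_ineq_set by simp
    show "Aset b d (Qmin d) = {(\<lambda>k. 2 * rho d k / (real b + 1)
        + (\<Sum>i=1..d-1. lam i * (real b * vv (d - i) k - vv i k))) | lam. \<forall>i\<in>{1..d-1}. lam i \<ge> 0}"
      unfolding shifted_cone rays_eq_ineq_cone[OF assms(1), symmetric] by (rule rho_shift_rays)
  qed
qed

end
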